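(* For every $m\in\mathbb{N}$ and every $\boldsymbol{X}=(X_1,\dots,X_m)\in\mathbb{N}^m$, with $\widehat{\boldsymbol{\mu}}_m$ the empirical measure of $\boldsymbol{X}$, $$\frac{1}{2\sqrt2}\Phi_m(\widehat{\boldsymbol{\mu}}_m)\le\hat{\mathfrak{R}}_m(\boldsymbol{X})\le\frac12\Phi_m(\widehat{\boldsymbol{\mu}}_m).$$
   Context: $\widehat{\boldsymbol{\mu}}_m(i)=\frac1m\sum_{t=1}^m\mathbb{I}\{X_t=i\}$. $\Phi_m(\widehat{\boldsymbol{\mu}}_m):=\frac1{\sqrt m}\sum_{j\in\mathbb{N}}\sqrt{\widehat{\boldsymbol{\mu}}_m(j)}$. $\hat{\mathfrak{R}}_m(\boldsymbol{X})=\mathbb{E}_{\boldsymbol{\sigma}}\big[\sup_{f:\mathbb{N}\to\{0,1\}}\frac1m\sum_{t=1}^m\sigma_tf(X_t)\big]$ with $\boldsymbol{\sigma}$ uniform on $\{-1,1\}^m$. *)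

theory Defs
  imports "HOL-Analysis.Analysis"
begin

text \<open>Samples are X :: nat => nat, with X_1..X_m the relevant entries.\<close>

definition emp_measure :: "nat \<Rightarrow> (nat \<Rightarrow> nat) \<Rightarrow> nat \<Rightarrow> real" where
  "emp_measure m X i = real (card {t \<in> {1..m}. X t = i}) / real m"

definition Phi :: "nat \<Rightarrow> (nat \<Rightarrow> real) \<Rightarrow> real" where
  "Phi m \<mu> = (1 / sqrt (real m)) * (\<Sum>\<^sub>\<infinity> j \<in> (UNIV :: nat set). sqrt (\<mu> j))"

definition sign_vectors :: "nat \<Rightarrow> (nat \<Rightarrow> real) set" where
  "sign_vectors m = {\<sigma>. (\<forall>t \<in> {1..m}. \<sigma> t \<in> {-1, 1}) \<and> (\<forall>t. t \<notin> {1..m} \<longrightarrow> \<sigma> t = 0)}"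

definition emp_rademacher :: "nat \<Rightarrow> (nat \<Rightarrow> nat) \<Rightarrow> real" where
  "emp_rademacher m X =
     (\<Sum>\<sigma> \<in> sign_vectors m.
        (SUP f \<in> (UNIV :: (nat \<Rightarrow> bool) set).
           (1 / real m) * (\<Sum>t = 1..m. \<sigma> t * of_bool (f (X t)))))
     / real (card (sign_vectors m))"

end

theory Submission
  imports Defs
begin

text \<open>
  Group the sample by value and let \<open>n\<^sub>j\<close> be the number of occurrences of \<open>j\<close>. For a fixed sign
  vector the supremum over \<open>f\<close> is attained at the indicator of the values whose partial sign sum
  is positive, so \<open>m \<cdot> R = \<Sum>\<^sub>j E max(0, S(n\<^sub>j)) = \<Sum>\<^sub>j E |S(n\<^sub>j)| / 2\<close>, where \<open>S(n)\<close> is a sum of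
  \<open>n\<close> independent Rademacher signs, while \<open>m \<cdot> \<Phi> = \<Sum>\<^sub>j \<surd>n\<^sub>j\<close>. It therefore suffices that
  \<open>\<surd>(n/2) \<le> E |S(n)| \<le> \<surd>n\<close>. The upper bound is Jensen's inequality. For the lower bound,
  \<open>E |S(n+1)| = E |S(n)| + P(S(n) = 0)\<close> gives \<open>E |S(2k-1)| = E |S(2k)| = 2k p\<^sub>k\<close> with
  \<open>p\<^sub>k = (2k choose k) / 4\<^sup>k\<close>, and \<open>4k p\<^sub>k\<^sup>2 \<ge> 1\<close> follows from \<open>p\<^sub>k\<^sub>+\<^sub>1 / p\<^sub>k = (2k+1)/(2k+2)\<close>.
\<close>

text \<open>\<open>walk_sum F n x\<close> is the sum of \<open>F\<close> over the endpoints of all \<open>2\<^sup>n\<close> simple walks of length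
  \<open>n\<close> started at \<open>x\<close>, i.e. \<open>2\<^sup>n E F(x + S(n))\<close>.\<close>

fun walk_sum :: "(real \<Rightarrow> real) \<Rightarrow> nat \<Rightarrow> real \<Rightarrow> real" where
  "walk_sum F 0 x = F x"
| "walk_sum F (Suc n) x = walk_sum F n (x + 1) + walk_sum F n (x - 1)"

lemma walk_sum_linear:
  "walk_sum (\<lambda>y. c * F y + d * G y) n x = c * walk_sum F n x + d * walk_sum G n x"
  by (induction n arbitrary: x) (auto simp: algebra_simps)

lemma walk_sum_ident: "walk_sum (\<lambda>y. y) n x = 2 ^ n * x"
  by (induction n arbitrary: x) (auto simp: algebra_simps)

lemma walk_sum_Suc_last: "walk_sum F (Suc n) x = walk_sum (\<lambda>y. F (y + 1) + F (y - 1)) n x"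
proof (induction n arbitrary: x)
  case (Suc n)
  show ?case by (subst (1 2) walk_sum.simps(2)) (simp only: Suc.IH)
qed simp

lemma walk_sum_cong_Ints:
  "(\<And>y. y \<in> \<int> \<Longrightarrow> F y = G y) \<Longrightarrow> x \<in> \<int> \<Longrightarrow> walk_sum F n x = walk_sum G n x"
  by (induction n arbitrary: x) auto

lemma walk_sum_binomial:
  "walk_sum F n x = (\<Sum>k\<le>n. real (n choose k) * F (x + real n - 2 * real k))"
proof (induction n arbitrary: x)
  case (Suc n)
  define G where "G k = F (x + real (Suc n) - 2 * real k)" for k
  have "(\<Sum>k\<le>Suc n. real (Suc n choose k) * G k)
      = (\<Sum>k\<le>Suc n. real (n choose k) * G k) + (\<Sum>k\<le>n. real (n choose k) * G (Suc k))"
    by (subst (1 2) sum.atMost_Suc_shift) (simp add: sum.distrib algebra_simps)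
  also have "\<dots> = walk_sum F (Suc n) x"
    by (simp add: Suc G_def algebra_simps)
  finally show ?case by (simp add: G_def)
qed simp

lemma sqrt_add_le_sqrt_double: "sqrt a + sqrt b \<le> sqrt (2 * (a + b))"
  if "a \<ge> 0" "b \<ge> 0" for a b :: real
proof (rule real_le_rsqrt)
  have "(sqrt a + sqrt b)\<^sup>2 + (sqrt a - sqrt b)\<^sup>2 = 2 * (a + b)"
    using that by (simp add: power2_eq_square algebra_simps)
  then show "(sqrt a + sqrt b)\<^sup>2 \<le> 2 * (a + b)"
    by (metis le_add_same_cancel1 zero_le_power2)
qed

text \<open>Jensen's inequality \<open>E |x + S(n)| \<le> \<surd>(E (x + S(n))\<^sup>2)\<close>, proved step by step.\<close>

lemma walk_sum_abs_le: "walk_sum abs n x \<le> 2 ^ n * sqrt (x\<^sup>2 + n)"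
proof (induction n arbitrary: x)
  case (Suc n)
  have "walk_sum abs (Suc n) x \<le> 2 ^ n * (sqrt ((x + 1)\<^sup>2 + n) + sqrt ((x - 1)\<^sup>2 + n))"
    using Suc[of "x + 1"] Suc[of "x - 1"] by (simp add: algebra_simps)
  also have "\<dots> \<le> 2 ^ n * sqrt (2 * (((x + 1)\<^sup>2 + n) + ((x - 1)\<^sup>2 + n)))"
    by (intro mult_left_mono sqrt_add_le_sqrt_double) auto
  also have "2 * (((x + 1)\<^sup>2 + n) + ((x - 1)\<^sup>2 + n)) = 2\<^sup>2 * (x\<^sup>2 + real (Suc n))"
    by (simp add: power2_eq_square algebra_simps)
  finally show ?case by (simp only: real_sqrt_mult) simp
qed simp

lemma walk_sum_zero_even: "walk_sum (\<lambda>y. of_bool (y = 0)) (2 * k) 0 = real ((2 * k) choose k)"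
proof -
  have "walk_sum (\<lambda>y. of_bool (y = 0)) (2 * k) 0
      = (\<Sum>i\<le>2 * k. if i = k then real ((2 * k) choose i) else 0)"
    unfolding walk_sum_binomial by (intro sum.cong) auto
  then show ?thesis by simp
qed

lemma walk_sum_zero_odd: "walk_sum (\<lambda>y. of_bool (y = 0)) (Suc (2 * k)) 0 = 0"
proof -
  have "real (Suc (2 * k)) - 2 * real i \<noteq> 0" for i
  proof
    assume "real (Suc (2 * k)) - 2 * real i = 0"
    then have "Suc (2 * k) = 2 * i" by linarith
    then show False by presburger
  qed
  then show ?thesis unfolding walk_sum_binomial by simp
qed

definition mean_abs_walk :: "nat \<Rightarrow> real" where
  "mean_abs_walk n = walk_sum abs n 0 / 2 ^ n"

lemma mean_abs_walk_Suc:
  "mean_abs_walk (Suc n) = mean_abs_walk n + walk_sum (\<lambda>y. of_bool (y = 0)) n 0 / 2 ^ n"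
proof -
  have "walk_sum abs (Suc n) 0 = walk_sum (\<lambda>y. \<bar>y + 1\<bar> + \<bar>y - 1\<bar>) n 0"
    by (rule walk_sum_Suc_last)
  also have "\<dots> = walk_sum (\<lambda>y. 2 * \<bar>y\<bar> + 2 * of_bool (y = 0)) n 0"
  proof (rule walk_sum_cong_Ints)
    fix y :: real
    assume "y \<in> \<int>"
    then obtain z :: int where "y = z" by (auto elim: Ints_cases)
    then show "\<bar>y + 1\<bar> + \<bar>y - 1\<bar> = 2 * \<bar>y\<bar> + 2 * of_bool (y = 0)"
      by (cases "z = 0"; cases "z > 0") auto
  qed simp
  also have "\<dots> = 2 * walk_sum abs n 0 + 2 * walk_sum (\<lambda>y. of_bool (y = 0)) n 0"
    by (rule walk_sum_linear)
  finally show ?thesis unfolding mean_abs_walk_def by (simp add: field_simps)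
qed

lemma mean_abs_walk_odd: "mean_abs_walk (Suc (2 * k)) = mean_abs_walk (2 * Suc k)"
  using mean_abs_walk_Suc[of "Suc (2 * k)"] walk_sum_zero_odd[of k] by simp

definition central_binomial_prob :: "nat \<Rightarrow> real" where
  "central_binomial_prob k = real ((2 * k) choose k) / 4 ^ k"

lemma central_binomial_Suc:
  "((2 * Suc k) choose Suc k) * Suc k = 2 * (2 * k + 1) * ((2 * k) choose k)"
proof -
  have "Suc k * ((2 * Suc k) choose Suc k) = 2 * Suc k * (Suc (2 * k) choose k)"
    using Suc_times_binomial[of k "Suc (2 * k)"] by simp
  moreover have "Suc k * (Suc (2 * k) choose k) = (2 * k + 1) * ((2 * k) choose k)"
    using Suc_times_binomial[of k "2 * k"] binomial_symmetric[of "Suc k" "Suc (2 * k)"] by simp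
  ultimately show ?thesis by (metis mult.assoc mult.commute)
qed

lemma central_binomial_prob_Suc:
  "central_binomial_prob (Suc k) * (2 * real k + 2) = central_binomial_prob k * (2 * real k + 1)"
proof -
  have "central_binomial_prob (Suc k) * (2 * real k + 2)
      = real (((2 * Suc k) choose Suc k) * Suc k) / (2 * 4 ^ k)"
    unfolding central_binomial_prob_def by (simp add: field_simps del: binomial_Suc_Suc)
  also have "\<dots> = real (2 * (2 * k + 1) * ((2 * k) choose k)) / (2 * 4 ^ k)"
    by (simp only: central_binomial_Suc)
  also have "\<dots> = central_binomial_prob k * (2 * real k + 1)"
    unfolding central_binomial_prob_def by (simp add: field_simps)
  finally show ?thesis .
qed

lemma mean_abs_walk_even: "mean_abs_walk (2 * k) = 2 * real k * central_binomial_prob k"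
proof (induction k)
  case 0
  then show ?case by (simp add: mean_abs_walk_def)
next
  case (Suc k)
  have "mean_abs_walk (2 * Suc k) = mean_abs_walk (2 * k) + central_binomial_prob k"
    using mean_abs_walk_Suc[of "2 * k"] mean_abs_walk_odd[of k] walk_sum_zero_even[of k]
    by (simp add: central_binomial_prob_def power_mult)
  also have "\<dots> = central_binomial_prob (Suc k) * (2 * k + 2)"
    using Suc central_binomial_prob_Suc[of k] by (simp add: algebra_simps)
  finally show ?case by (simp add: algebra_simps)
qed

lemma central_binomial_prob_lower: "1 \<le> 4 * real k * (central_binomial_prob k)\<^sup>2"
  if "k \<ge> 1"
  using that
proof (induction k rule: dec_induct)
  case base
  then show ?case by (simp add: central_binomial_prob_def power2_eq_square)
next
  case (step k)
  let ?p = "central_binomial_prob"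
  have "4 * real k * (?p k)\<^sup>2 * (4 * real k * (real k + 1))
      \<le> 4 * real k * (?p k)\<^sup>2 * (2 * real k + 1)\<^sup>2"
    by (intro mult_left_mono) (auto simp: power2_eq_square algebra_simps)
  also have "\<dots> = 4 * real k * (?p k * (2 * real k + 1))\<^sup>2"
    by (simp add: power_mult_distrib)
  also have "\<dots> = 4 * real k * (?p (Suc k) * (2 * real k + 2))\<^sup>2"
    by (simp only: central_binomial_prob_Suc)
  also have "\<dots> = 4 * real (Suc k) * (?p (Suc k))\<^sup>2 * (4 * real k * (real k + 1))"
    by (simp add: power2_eq_square algebra_simps)
  finally have "4 * real k * (?p k)\<^sup>2 \<le> 4 * real (Suc k) * (?p (Suc k))\<^sup>2"
    by (rule mult_right_le_imp_le) (use step in simp)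
  with step.IH show ?case by linarith
qed

lemma mean_abs_walk_even_ge: "sqrt k \<le> mean_abs_walk (2 * k)"
proof (cases "k = 0")
  case False
  have "(sqrt k)\<^sup>2 \<le> real k * (4 * real k * (central_binomial_prob k)\<^sup>2)"
    using central_binomial_prob_lower[of k] False by simp
  also have "\<dots> = (mean_abs_walk (2 * k))\<^sup>2"
    unfolding mean_abs_walk_even by (simp add: power2_eq_square algebra_simps)
  finally show ?thesis
    unfolding mean_abs_walk_even by (rule power2_le_imp_le) (simp add: central_binomial_prob_def)
qed (simp add: mean_abs_walk_def)

lemma mean_abs_walk_ge: "sqrt (real n / 2) \<le> mean_abs_walk n"
proof (cases "even n")
  case True
  then obtain k where "n = 2 * k" by blast
  then show ?thesis using mean_abs_walk_even_ge[of k] by simp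
next
  case False
  then obtain k where n: "n = Suc (2 * k)" by (metis oddE Suc_eq_plus1)
  have "sqrt (real n / 2) \<le> sqrt (Suc k)"
    using n by (intro real_sqrt_le_mono) simp
  also have "\<dots> \<le> mean_abs_walk n"
    using mean_abs_walk_even_ge[of "Suc k"] mean_abs_walk_odd[of k] n by simp
  finally show ?thesis .
qed

lemma mean_abs_walk_le: "mean_abs_walk n \<le> sqrt n"
  using walk_sum_abs_le[of n 0] by (simp add: mean_abs_walk_def divide_le_eq mult.commute)

definition signs :: "nat set \<Rightarrow> (nat \<Rightarrow> real) set" where
  "signs A = {\<sigma>. (\<forall>t \<in> A. \<sigma> t \<in> {-1, 1}) \<and> (\<forall>t. t \<notin> A \<longrightarrow> \<sigma> t = 0)}"

lemma sign_vectors_eq_signs: "sign_vectors m = signs {1..m}"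
  unfolding sign_vectors_def signs_def ..

lemma signs_empty: "signs {} = {\<lambda>_. 0}"
  by (auto simp: signs_def)

lemma signs_insert:
  assumes "a \<notin> A"
  shows "signs (insert a A) = (\<lambda>\<sigma>. \<sigma>(a := 1)) ` signs A \<union> (\<lambda>\<sigma>. \<sigma>(a := -1)) ` signs A"
proof (intro equalityI subsetI)
  fix \<sigma>
  assume \<sigma>: "\<sigma> \<in> signs (insert a A)"
  then have "\<sigma>(a := 0) \<in> signs A" and "\<sigma> = (\<sigma>(a := 0))(a := \<sigma> a)" and "\<sigma> a = 1 \<or> \<sigma> a = -1"
    using assms by (auto simp: signs_def)
  then show "\<sigma> \<in> (\<lambda>\<sigma>. \<sigma>(a := 1)) ` signs A \<union> (\<lambda>\<sigma>. \<sigma>(a := -1)) ` signs A"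
    by (metis UnI1 UnI2 image_eqI)
qed (fastforce simp: signs_def)

lemma inj_on_fun_upd_signs:
  assumes "a \<notin> A"
  shows "inj_on (\<lambda>\<sigma>. \<sigma>(a := c)) (signs A)"
proof (rule inj_onI)
  fix \<sigma> \<tau>
  assume "\<sigma> \<in> signs A" "\<tau> \<in> signs A" "\<sigma>(a := c) = \<tau>(a := c)"
  then have "\<sigma> t = \<tau> t" for t
    using assms by (cases "t = a") (auto simp: signs_def dest: fun_cong[where x = t])
  then show "\<sigma> = \<tau>" ..
qed

lemma finite_signs: "finite A \<Longrightarrow> finite (signs A)"
  by (induction A rule: finite_induct) (simp_all add: signs_empty signs_insert)

lemma sum_signs_insert:
  assumes "a \<notin> A" "finite A"
  shows "(\<Sum>\<sigma>\<in>signs (insert a A). G \<sigma>) = (\<Sum>\<sigma>\<in>signs A. G (\<sigma>(a := 1)) + G (\<sigma>(a := -1)))"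
proof -
  have "(\<lambda>\<sigma>. \<sigma>(a := 1)) ` signs A \<inter> (\<lambda>\<sigma>. \<sigma>(a := -1)) ` signs A = {}"
    by (auto dest: fun_cong[where x = a])
  then have "(\<Sum>\<sigma>\<in>signs (insert a A). G \<sigma>)
      = (\<Sum>\<sigma>\<in>(\<lambda>\<sigma>. \<sigma>(a := 1)) ` signs A. G \<sigma>) + (\<Sum>\<sigma>\<in>(\<lambda>\<sigma>. \<sigma>(a := -1)) ` signs A. G \<sigma>)"
    unfolding signs_insert[OF assms(1)]
    by (intro sum.union_disjoint) (simp_all add: finite_signs assms(2))
  also have "\<dots> = (\<Sum>\<sigma>\<in>signs A. G (\<sigma>(a := 1))) + (\<Sum>\<sigma>\<in>signs A. G (\<sigma>(a := -1)))"
    by (simp add: sum.reindex inj_on_fun_upd_signs assms(1))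
  finally show ?thesis by (simp add: sum.distrib)
qed

text \<open>Signs outside \<open>B\<close> do not affect the summand, so each of them only doubles the sum.\<close>

lemma sum_signs_eq_walk_sum:
  assumes "finite A" "B \<subseteq> A"
  shows "(\<Sum>\<sigma>\<in>signs A. F (x + (\<Sum>t\<in>B. \<sigma> t))) = 2 ^ (card A - card B) * walk_sum F (card B) x"
  using assms
proof (induction A arbitrary: B x rule: finite_induct)
  case empty
  then show ?case by (simp add: signs_empty)
next
  case (insert a A)
  show ?case
  proof (cases "a \<in> B")
    case True
    let ?B = "B - {a}"
    have "finite B"
      using insert.prems insert.hyps(1) by (rule finite_subset[OF _ finite_insert[THEN iffD2]])
    then have B: "?B \<subseteq> A" "finite ?B" "card B = Suc (card ?B)"
      using insert True card_Suc_Diff1[of B a] by auto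
    have upd: "(\<Sum>t\<in>B. (\<sigma>(a := c)) t) = c + (\<Sum>t\<in>?B. \<sigma> t)" for \<sigma> :: "nat \<Rightarrow> real" and c
      using True B(2) by (simp add: sum.remove[of B a])
    have "(\<Sum>\<sigma>\<in>signs (insert a A). F (x + (\<Sum>t\<in>B. \<sigma> t)))
        = (\<Sum>\<sigma>\<in>signs A. F ((x + 1) + (\<Sum>t\<in>?B. \<sigma> t))) + (\<Sum>\<sigma>\<in>signs A. F ((x - 1) + (\<Sum>t\<in>?B. \<sigma> t)))"
      unfolding sum_signs_insert[OF insert.hyps(2,1)] upd by (simp add: sum.distrib algebra_simps)
    also have "\<dots> = 2 ^ (card A - card ?B) * walk_sum F (Suc (card ?B)) x"
      using insert.IH[OF B(1)] by (simp add: distrib_left)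
    finally show ?thesis using B insert.hyps by simp
  next
    case False
    then have "B \<subseteq> A" using insert.prems by auto
    then have "card B \<le> card A" using insert.hyps(1) by (rule card_mono[rotated])
    have upd: "(\<Sum>t\<in>B. (\<sigma>(a := c)) t) = (\<Sum>t\<in>B. \<sigma> t)" for \<sigma> :: "nat \<Rightarrow> real" and c
      using False by (intro sum.cong) auto
    show ?thesis
      unfolding sum_signs_insert[OF insert.hyps(2,1)] upd
      using insert.IH[OF \<open>B \<subseteq> A\<close>] insert.hyps \<open>card B \<le> card A\<close>
      by (simp add: Suc_diff_le sum_distrib_left[symmetric])
  qed
qed

lemma card_signs: "finite A \<Longrightarrow> card (signs A) = 2 ^ card A"
  using sum_signs_eq_walk_sum[of A "{}" "\<lambda>_. 1" 0]
  by (simp flip: of_nat_power)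

lemma sum_signs_max_zero:
  assumes "finite A" "B \<subseteq> A"
  shows "(\<Sum>\<sigma>\<in>signs A. max 0 (\<Sum>t\<in>B. \<sigma> t)) = 2 ^ card A * (mean_abs_walk (card B) / 2)"
proof -
  have "(\<lambda>y::real. max 0 y) = (\<lambda>y. 1/2 * y + 1/2 * \<bar>y\<bar>)"
    by (auto simp: fun_eq_iff)
  then have "walk_sum abs n 0 = 2 * walk_sum (\<lambda>y. max 0 y) n 0" for n
    using walk_sum_linear[of "1/2" "\<lambda>y. y" "1/2" abs n 0] walk_sum_ident[of n 0] by simp
  moreover have "card B \<le> card A"
    using assms by (rule card_mono)
  ultimately show ?thesis
    using sum_signs_eq_walk_sum[OF assms, of "\<lambda>y. max 0 y" 0]
    by (simp add: mean_abs_walk_def power_diff)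
qed

lemma sum_group_by_value:
  fixes \<sigma> :: "'a \<Rightarrow> 'b::semiring_0"
  assumes "finite T"
  shows "(\<Sum>t\<in>T. \<sigma> t * g (X t)) = (\<Sum>j\<in>X ` T. (\<Sum>t\<in>{t \<in> T. X t = j}. \<sigma> t) * g j)"
proof -
  have "(\<Sum>t\<in>T. \<sigma> t * g (X t)) = (\<Sum>j\<in>X ` T. \<Sum>t\<in>{t \<in> T. X t = j}. \<sigma> t * g (X t))"
    using assms by (intro sum.group[symmetric]) auto
  also have "\<dots> = (\<Sum>j\<in>X ` T. \<Sum>t\<in>{t \<in> T. X t = j}. \<sigma> t * g j)"
    by (intro sum.cong refl) auto
  finally show ?thesis by (simp add: sum_distrib_right)
qed

lemma SUP_indicator_sum:
  fixes S :: "'a \<Rightarrow> real"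
  assumes "finite J" "c \<ge> 0"
  shows "(SUP f \<in> UNIV. c * (\<Sum>j\<in>J. S j * of_bool (f j))) = c * (\<Sum>j\<in>J. max 0 (S j))"
proof (rule cSup_eq_maximum)
  have "(\<Sum>j\<in>J. S j * of_bool (S j > 0)) = (\<Sum>j\<in>J. max 0 (S j))"
    by (intro sum.cong) auto
  then show "c * (\<Sum>j\<in>J. max 0 (S j)) \<in> (\<lambda>f. c * (\<Sum>j\<in>J. S j * of_bool (f j))) ` UNIV"
    by (intro image_eqI[of _ _ "\<lambda>j. S j > 0"]) auto
next
  fix y
  assume "y \<in> (\<lambda>f. c * (\<Sum>j\<in>J. S j * of_bool (f j))) ` UNIV"
  then obtain f where "y = c * (\<Sum>j\<in>J. S j * of_bool (f j))" by blast
  then show "y \<le> c * (\<Sum>j\<in>J. max 0 (S j))"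
    using assms(2) by (auto intro!: mult_left_mono sum_mono)
qed

lemma emp_rademacher_eq_mean_abs_walk:
  "emp_rademacher m X
    = 1 / real m * (\<Sum>j\<in>X ` {1..m}. mean_abs_walk (card {t \<in> {1..m}. X t = j}) / 2)"
proof -
  define B where "B j = {t \<in> {1..m}. X t = j}" for j
  have signs_max: "(\<Sum>\<sigma>\<in>signs {1..m}. max 0 (\<Sum>t\<in>B j. \<sigma> t)) = 2 ^ m * (mean_abs_walk (card (B j)) / 2)"
    for j using sum_signs_max_zero[OF finite_atLeastAtMost, of "B j" 1 m] by (simp add: B_def subset_iff)
  have "(SUP f \<in> UNIV. 1 / real m * (\<Sum>t = 1..m. \<sigma> t * of_bool (f (X t))))
      = 1 / real m * (\<Sum>j\<in>X ` {1..m}. max 0 (\<Sum>t\<in>B j. \<sigma> t))" for \<sigma>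
  proof -
    have "(\<Sum>t = 1..m. \<sigma> t * of_bool (f (X t))) = (\<Sum>j\<in>X ` {1..m}. (\<Sum>t\<in>B j. \<sigma> t) * of_bool (f j))"
      for f unfolding B_def by (rule sum_group_by_value) simp
    then show ?thesis by (simp only:) (rule SUP_indicator_sum, simp_all)
  qed
  then have "emp_rademacher m X
      = (\<Sum>\<sigma>\<in>signs {1..m}. 1 / real m * (\<Sum>j\<in>X ` {1..m}. max 0 (\<Sum>t\<in>B j. \<sigma> t))) / 2 ^ m"
    unfolding emp_rademacher_def sign_vectors_eq_signs by (simp add: card_signs)
  also have "\<dots> = 1 / real m * (\<Sum>j\<in>X ` {1..m}. \<Sum>\<sigma>\<in>signs {1..m}. max 0 (\<Sum>t\<in>B j. \<sigma> t)) / 2 ^ m"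
    by (simp only: sum_distrib_left[symmetric] sum.swap[of _ "X ` {1..m}"])
  also have "\<dots> = 1 / real m * (\<Sum>j\<in>X ` {1..m}. 2 ^ m * (mean_abs_walk (card (B j)) / 2)) / 2 ^ m"
    by (simp only: signs_max)
  also have "\<dots> = 1 / real m * (\<Sum>j\<in>X ` {1..m}. mean_abs_walk (card (B j)) / 2)"
    by (simp only: sum_distrib_left[symmetric]) simp
  finally show ?thesis unfolding B_def .
qed

lemma Phi_emp_measure:
  "Phi m (emp_measure m X) = 1 / real m * (\<Sum>j\<in>X ` {1..m}. sqrt (card {t \<in> {1..m}. X t = j}))"
proof -
  have "(\<Sum>\<^sub>\<infinity>j\<in>UNIV. sqrt (emp_measure m X j)) = (\<Sum>\<^sub>\<infinity>j\<in>X ` {1..m}. sqrt (emp_measure m X j))"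
    by (intro infsum_cong_neutral) (auto simp: emp_measure_def)
  also have "\<dots> = (\<Sum>j\<in>X ` {1..m}. sqrt (card {t \<in> {1..m}. X t = j}) / sqrt m)"
    by (simp add: emp_measure_def real_sqrt_divide)
  finally show ?thesis
    unfolding Phi_def by (simp add: sum_divide_distrib[symmetric] real_sqrt_mult[symmetric])
qed

theorem lemma2:
  fixes m :: nat and X :: "nat \<Rightarrow> nat"
  shows "1 / (2 * sqrt 2) * Phi m (emp_measure m X) \<le> emp_rademacher m X
       \<and> emp_rademacher m X \<le> 1 / 2 * Phi m (emp_measure m X)"
proof -
  define n where "n j = card {t \<in> {1..m}. X t = j}" for j
  have R: "emp_rademacher m X = 1 / real m * (\<Sum>j\<in>X ` {1..m}. mean_abs_walk (n j) / 2)"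
    unfolding emp_rademacher_eq_mean_abs_walk n_def ..
  have P: "c * Phi m (emp_measure m X) = 1 / real m * (\<Sum>j\<in>X ` {1..m}. c * sqrt (n j))" for c
    unfolding Phi_emp_measure n_def by (simp add: sum_distrib_left mult_ac)
  have lower: "1 / (2 * sqrt 2) * sqrt (n j) \<le> mean_abs_walk (n j) / 2" for j
    using mean_abs_walk_ge[of "n j"] by (simp add: real_sqrt_divide)
  have upper: "mean_abs_walk (n j) / 2 \<le> 1 / 2 * sqrt (n j)" for j
    using mean_abs_walk_le[of "n j"] by simp
  show ?thesis
    unfolding R P by (intro conjI mult_left_mono sum_mono lower upper) simp_all
qed

end
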